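(* Let $d_A,d_B\ge 2$ and let $\rho_{AB}$ be a separable density operator on $\mathbb{C}^{d_A}\otimes\mathbb{C}^{d_B}$, i.e. $\rho_{AB}=\sum_j q_j\,\rho^A_j\otimes\rho^B_j$ with $q_j\ge0$, $\sum_j q_j=1$ and $\rho^A_j,\rho^B_j$ density operators. Let $\{|i_{mA}\rangle\}_{i=1}^{d_A}$, $m=1,\dots,M$, be $M$ mutually unbiased bases of $\mathbb{C}^{d_A}$ and $\{|s_{mB}\rangle\}_{s=1}^{d_B}$, $m=1,\dots,M$, be $M$ mutually unbiased bases of $\mathbb{C}^{d_B}$, and let $p^{(m,m)}_{is}=\langle i_{mA}|\langle s_{mB}|\rho_{AB}|i_{mA}\rangle|s_{mB}\rangle$. With $K_X=\left\lfloor\frac{Md_X}{d_X+M-1}\right\rfloor$ for $X\in\{A,B\}$, $$\sum_{m=1}^M H\{p^{(m,m)}_{is};is\}\ge \sum_{X\in\{A,B\}}\Big[M\log_2K_X+(K_X+1)\Big(M-K_X\frac{d_X+M-1}{d_X}\Big)\log_2\Big(1+\frac1{K_X}\Big)\Big].$$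
   Context: Orthonormal bases $\{|i_m\rangle\}_{i=1}^d$, $m=1,\dots,M$, of $\mathbb{C}^d$ are mutually unbiased if $|\langle i_m|j_n\rangle|^2=1/d$ for all $i,j$ and all $m\ne n$. $H\{p^{(m,m)}_{is};is\}=-\sum_{i,s}p^{(m,m)}_{is}\log_2 p^{(m,m)}_{is}$ (with $0\log_2 0=0$) is the Shannon entropy of the joint outcome distribution when $A$ and $B$ are both measured in their $m$th bases. *)

theory Defs
  imports Complex_Main
begin

text \<open>Vectors of C^d are functions nat => complex, only indices < d matter.
  Operators on C^d are functions nat => nat => complex (matrix entries, indices < d).
  Operators on C^dA (x) C^dB are indexed by pairs (a,b) with a < dA, b < dB.\<close>

definition cinner :: "nat \<Rightarrow> (nat \<Rightarrow> complex) \<Rightarrow> (nat \<Rightarrow> complex) \<Rightarrow> complex" where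
  "cinner d u v = (\<Sum>k<d. cnj (u k) * v k)"

definition orthonormal_basis :: "nat \<Rightarrow> (nat \<Rightarrow> nat \<Rightarrow> complex) \<Rightarrow> bool" where
  "orthonormal_basis d e \<longleftrightarrow>
     (\<forall>i<d. \<forall>j<d. cinner d (e i) (e j) = (if i = j then 1 else 0))"

text \<open>e m is the m-th basis (m < M), e m i its i-th vector.\<close>
definition mutually_unbiased :: "nat \<Rightarrow> nat \<Rightarrow> (nat \<Rightarrow> nat \<Rightarrow> nat \<Rightarrow> complex) \<Rightarrow> bool" where
  "mutually_unbiased d M e \<longleftrightarrow>
     (\<forall>m<M. orthonormal_basis d (e m)) \<and>
     (\<forall>m<M. \<forall>n<M. m \<noteq> n \<longrightarrow>
        (\<forall>i<d. \<forall>j<d. (cmod (cinner d (e m i) (e n j)))\<^sup>2 = 1 / real d))"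

definition density_op :: "nat \<Rightarrow> (nat \<Rightarrow> nat \<Rightarrow> complex) \<Rightarrow> bool" where
  "density_op d \<rho> \<longleftrightarrow>
     (\<forall>i<d. \<forall>j<d. \<rho> i j = cnj (\<rho> j i)) \<and>
     (\<forall>v. 0 \<le> Re (\<Sum>i<d. \<Sum>j<d. cnj (v i) * \<rho> i j * v j)) \<and>
     (\<Sum>i<d. \<rho> i i) = 1"

definition separable ::
  "nat \<Rightarrow> nat \<Rightarrow> (nat \<times> nat \<Rightarrow> nat \<times> nat \<Rightarrow> complex) \<Rightarrow> bool" where
  "separable dA dB \<rho> \<longleftrightarrow>
     (\<exists>(J::nat) (q::nat \<Rightarrow> real) \<rho>A \<rho>B.
        (\<forall>j<J. 0 \<le> q j) \<and> (\<Sum>j<J. q j) = 1 \<and>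
        (\<forall>j<J. density_op dA (\<rho>A j) \<and> density_op dB (\<rho>B j)) \<and>
        (\<forall>a<dA. \<forall>b<dB. \<forall>a'<dA. \<forall>b'<dB.
           \<rho> (a, b) (a', b') = (\<Sum>j<J. complex_of_real (q j) * \<rho>A j a a' * \<rho>B j b b')))"

text \<open>p i s = <i|<s| rho |i>|s> for product vector |i>|s>.\<close>
definition joint_prob ::
  "nat \<Rightarrow> nat \<Rightarrow> (nat \<times> nat \<Rightarrow> nat \<times> nat \<Rightarrow> complex) \<Rightarrow>
   (nat \<Rightarrow> complex) \<Rightarrow> (nat \<Rightarrow> complex) \<Rightarrow> real" where
  "joint_prob dA dB \<rho> u v =
     Re (\<Sum>a<dA. \<Sum>b<dB. \<Sum>a'<dA. \<Sum>b'<dB.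
           cnj (u a) * cnj (v b) * \<rho> (a, b) (a', b') * u a' * v b')"

definition shannon2 :: "nat \<Rightarrow> nat \<Rightarrow> (nat \<Rightarrow> nat \<Rightarrow> real) \<Rightarrow> real" where
  "shannon2 dA dB p = - (\<Sum>i<dA. \<Sum>s<dB. (if p i s = 0 then 0 else p i s * log 2 (p i s)))"

definition Kval :: "nat \<Rightarrow> nat \<Rightarrow> real" where
  "Kval M d = real_of_int \<lfloor>real M * real d / (real d + real M - 1)\<rfloor>"

definition bound_term :: "nat \<Rightarrow> nat \<Rightarrow> real" where
  "bound_term M d = (let K = Kval M d in
     real M * log 2 K + (K + 1) * (real M - K * (real d + real M - 1) / real d) * log 2 (1 + 1 / K))"

end

theory Submission
  imports Defs "Jordan_Normal_Form.Determinant" "HOL-Analysis.Convex"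
begin

text \<open>A separable state is a mixture of product states, and a product state yields product
  outcome distributions; by concavity and additivity of the Shannon entropy it therefore suffices
  to bound \<open>\<Sum>\<^sub>m H(p\<^sub>m)\<close> for one density operator \<open>\<sigma>\<close> on \<open>\<complex>\<^sup>d\<close>, where
  \<open>p\<^sub>m(i) = \<langle>i\<^sub>m|\<sigma>|i\<^sub>m\<rangle>\<close>.
  The Harremoes-Topsoe inequality \<open>H(p) \<ge> ln K + (K + 1) (1 - K \<Sum>\<^sub>i p\<^sub>i\<^sup>2) ln (1 + 1/K)\<close>, valid
  for every integer \<open>K \<ge> 1\<close>, reduces each entropy to an index of coincidence, and for \<open>M\<close>
  mutually unbiased bases \<open>\<Sum>\<^sub>m \<Sum>\<^sub>i p\<^sub>m(i)\<^sup>2 \<le> 1 + (M - 1)/d\<close>: expand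
  \<open>\<parallel>\<sigma> - \<Sum>\<^sub>m \<Sum>\<^sub>i p\<^sub>m(i) |i\<^sub>m\<rangle>\<langle>i\<^sub>m| + (M - 1)/d \<cdot> I\<parallel>\<^sup>2 \<ge> 0\<close> in the Hilbert-Schmidt norm and use
  \<open>tr \<sigma>\<^sup>2 \<le> 1\<close>.

  The Harremoes-Topsoe inequality itself says \<open>\<Sum>\<^sub>i \<phi>(p\<^sub>i) \<ge> 0\<close> for
  \<open>\<phi>(x) = x (c x - ln x - A)\<close> with suitable constants \<open>c\<close>, \<open>A\<close>. Masses below \<open>1/(2c)\<close> can be
  merged, as \<open>\<phi>\<close> is subadditive there; above \<open>1/(2c)\<close> the function \<open>\<phi>\<close> is convex, so by Jensen
  only one small mass \<open>b\<close> and \<open>m\<close> equal large masses remain, and the cases \<open>m > K\<close>, \<open>m = K\<close>,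
  \<open>m < K\<close> are one-variable inequalities.\<close>

section \<open>The Harremoes-Topsoe inequality\<close>

lemma one_minus_inverse_le_ln: "0 < y \<Longrightarrow> 1 - 1 / y \<le> ln (y::real)"
  using ln_le_minus_one[of "1 / y"] by (simp add: ln_div)

lemma convex_on_pos_left_of_root:
  fixes f :: "real \<Rightarrow> real"
  assumes "convex_on S f" "x \<in> S" "r \<in> S" "x \<le> y" "y < r" "f r = 0" "0 < f y"
  shows "0 < f x"
proof (cases "x = y")
  case False
  define t where "t = (y - x) / (r - x)"
  have t: "0 \<le> t" "t < 1" unfolding t_def using assms False by (auto simp: field_simps)
  have "t * (r - x) = y - x" unfolding t_def using assms by simp
  then have "(1 - t) *\<^sub>R x + t *\<^sub>R r = y" by (simp add: algebra_simps)
  then have "f y \<le> (1 - t) * f x"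
    using convex_onD[OF assms(1), of t x r] t assms by simp
  then show ?thesis using t assms by (smt (verit) mult_nonneg_nonpos)
qed (use assms in simp)

definition ht_log :: "real \<Rightarrow> real" where
  "ht_log K = ln (1 + 1 / K)"

definition ht_slope :: "real \<Rightarrow> real" where
  "ht_slope K = K * (K + 1) * ht_log K"

definition ht_offset :: "real \<Rightarrow> real" where
  "ht_offset K = ln K + (K + 1) * ht_log K"

text \<open>For a probability vector \<open>p\<close>, \<open>\<Sum>i. ht_phi K (p i)\<close> is the Shannon entropy of \<open>p\<close>
  (in nats) minus the Harremoes-Topsoe lower bound \<open>ht_offset K - ht_slope K * (\<Sum>i. (p i)\<^sup>2)\<close>.\<close>
definition ht_phi :: "real \<Rightarrow> real \<Rightarrow> real" where
  "ht_phi K x = x * (ht_slope K * x - ln x - ht_offset K)"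

lemma ht_phi_zero: "ht_phi K 0 = 0"
  by (simp add: ht_phi_def)

definition ht_phi_deriv :: "real \<Rightarrow> real \<Rightarrow> real" where
  "ht_phi_deriv K x = 2 * ht_slope K * x - ln x - ht_offset K - 1"

definition ht_pair :: "real \<Rightarrow> real \<Rightarrow> real" where
  "ht_pair K b = ht_phi K b + K * ht_phi K ((1 - b) / K)"

definition ht_pair_deriv :: "real \<Rightarrow> real \<Rightarrow> real" where
  "ht_pair_deriv K b = ht_phi_deriv K b - ht_phi_deriv K ((1 - b) / K)"

context
  fixes K :: real
  assumes K_ge_1: "1 \<le> K"
begin

lemma ht_log_bounds: "1 / (K + 1) \<le> ht_log K" "ht_log K \<le> 1 / K"
proof -
  have pos: "0 < 1 + 1 / K" using K_ge_1 by (simp add: add_pos_pos)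
  show "ht_log K \<le> 1 / K" unfolding ht_log_def using ln_le_minus_one[OF pos] by simp
  have "1 - 1 / (1 + 1 / K) = 1 / (K + 1)" using K_ge_1 by (simp add: field_simps)
  then show "1 / (K + 1) \<le> ht_log K"
    unfolding ht_log_def using one_minus_inverse_le_ln[OF pos] by simp
qed

lemma ht_slope_bounds: "K \<le> ht_slope K" "ht_slope K \<le> K + 1"
proof -
  have "K * (K + 1) * (1 / (K + 1)) \<le> K * (K + 1) * ht_log K"
    using ht_log_bounds(1) K_ge_1 by (intro mult_left_mono) auto
  then show "K \<le> ht_slope K" unfolding ht_slope_def using K_ge_1 by simp
  have "K * (K + 1) * ht_log K \<le> K * (K + 1) * (1 / K)"
    using ht_log_bounds(2) K_ge_1 by (intro mult_left_mono) auto
  then show "ht_slope K \<le> K + 1" unfolding ht_slope_def using K_ge_1 by simp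
qed

lemma ht_slope_pos: "0 < ht_slope K"
  using ht_slope_bounds(1) K_ge_1 by linarith

lemma ht_offset_eq_upper: "ht_offset K = ln K + ht_slope K / K"
  unfolding ht_offset_def ht_slope_def using K_ge_1 by simp

lemma ht_offset_eq_lower: "ht_offset K = ln (K + 1) + ht_slope K / (K + 1)"
proof -
  have "1 + 1 / K = (K + 1) / K" using K_ge_1 by (simp add: field_simps)
  then have "ht_log K = ln (K + 1) - ln K" unfolding ht_log_def using K_ge_1 by (simp add: ln_div)
  moreover have "ht_slope K / (K + 1) = K * ht_log K" unfolding ht_slope_def using K_ge_1 by simp
  ultimately show ?thesis unfolding ht_offset_def by (simp add: algebra_simps)
qed

text \<open>Tangent-line bounds for \<open>-ln\<close> at \<open>1 / K\<close> and at \<open>1 / (K + 1)\<close>.\<close>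
lemma ht_bracket_ge_upper:
  assumes "0 < x"
  shows "(K * x - 1) * (ht_slope K / K - 1) \<le> ht_slope K * x - ln x - ht_offset K"
proof -
  have "1 - 1 / (K * x) \<le> ln (K * x)" using assms K_ge_1 by (intro one_minus_inverse_le_ln) simp
  then have "1 - K * x \<le> - ln x - ln K"
    using ln_le_minus_one[of "K * x"] assms K_ge_1 by (simp add: ln_mult)
  moreover have "1 - K * x + ht_slope K * x - ht_slope K / K = (K * x - 1) * (ht_slope K / K - 1)"
    using K_ge_1 by (simp add: field_simps)
  ultimately show ?thesis unfolding ht_offset_eq_upper by linarith
qed

lemma ht_bracket_ge_lower:
  assumes "0 < x"
  shows "(1 - (K + 1) * x) * (1 - ht_slope K / (K + 1)) \<le> ht_slope K * x - ln x - ht_offset K"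
proof -
  have "1 - 1 / (1 / ((K + 1) * x)) \<le> ln (1 / ((K + 1) * x))"
    using assms K_ge_1 by (intro one_minus_inverse_le_ln) simp
  then have "1 - (K + 1) * x \<le> - ln x - ln (K + 1)"
    using assms K_ge_1 by (simp add: ln_div ln_mult)
  moreover have "1 - (K + 1) * x + ht_slope K * x - ht_slope K / (K + 1)
      = (1 - (K + 1) * x) * (1 - ht_slope K / (K + 1))"
    using K_ge_1 by (simp add: field_simps)
  ultimately show ?thesis unfolding ht_offset_eq_lower by linarith
qed

lemma ht_phi_nonneg_below:
  assumes "0 \<le> x" "x \<le> 1 / (K + 1)"
  shows "0 \<le> ht_phi K x"
proof (cases "x = 0")
  case False
  have "0 \<le> 1 - (K + 1) * x" using assms K_ge_1 by (simp add: field_simps)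
  moreover have "0 \<le> 1 - ht_slope K / (K + 1)" using ht_slope_bounds K_ge_1 by (simp add: field_simps)
  ultimately have "0 \<le> ht_slope K * x - ln x - ht_offset K"
    using ht_bracket_ge_lower[of x] assms False by (smt (verit) mult_nonneg_nonneg)
  then show ?thesis unfolding ht_phi_def using assms by simp
qed (simp add: ht_phi_def)

lemma ht_phi_nonneg_above:
  assumes "1 / K \<le> x"
  shows "0 \<le> ht_phi K x"
proof -
  have x: "0 < x" using assms K_ge_1 by (smt (verit) divide_pos_pos)
  have "0 \<le> K * x - 1" using assms K_ge_1 by (simp add: field_simps)
  moreover have "0 \<le> ht_slope K / K - 1" using ht_slope_bounds K_ge_1 by (simp add: field_simps)
  ultimately have "0 \<le> ht_slope K * x - ln x - ht_offset K"
    using ht_bracket_ge_upper[OF x] by (smt (verit) mult_nonneg_nonneg)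
  then show ?thesis unfolding ht_phi_def using x by simp
qed

lemma ht_phi_lower_root: "ht_phi K (1 / (K + 1)) = 0"
  unfolding ht_phi_def ht_offset_eq_lower using K_ge_1 by (simp add: ln_div)

lemma ht_phi_upper_root: "ht_phi K (1 / K) = 0"
  unfolding ht_phi_def ht_offset_eq_upper using K_ge_1 by (simp add: ln_div)

lemma ht_bracket_antimono:
  assumes "0 < x" "x \<le> z" "z \<le> 1 / ht_slope K"
  shows "ht_slope K * z - ln z \<le> ht_slope K * x - ln x"
proof -
  have z: "0 < z" using assms by linarith
  have "1 - 1 / (z / x) \<le> ln (z / x)" using assms z by (intro one_minus_inverse_le_ln) simp
  then have "1 - x / z \<le> ln z - ln x" using assms z by (simp add: ln_div)
  moreover have "(z - x) * ht_slope K \<le> (z - x) * (1 / z)"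
    using assms z ht_slope_pos by (intro mult_left_mono) (simp_all add: field_simps)
  moreover have "(z - x) * (1 / z) = 1 - x / z" using z by (simp add: field_simps)
  ultimately show ?thesis by (simp add: algebra_simps)
qed

lemma ht_phi_subadditive:
  assumes "0 \<le> x" "0 \<le> y" "x + y \<le> 1 / ht_slope K"
  shows "ht_phi K (x + y) \<le> ht_phi K x + ht_phi K y"
proof -
  have "u * (ht_slope K * (x + y) - ln (x + y)) \<le> u * (ht_slope K * u - ln u)"
    if "u = x \<or> u = y" for u
  proof (cases "u = 0")
    case False
    then show ?thesis using that assms ht_bracket_antimono[of u "x + y"] by (intro mult_left_mono) auto
  qed simp
  from this[of x] this[of y] show ?thesis unfolding ht_phi_def by (simp add: algebra_simps)
qed

lemma ht_phi_has_derivative: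
  assumes "0 < x"
  shows "(ht_phi K has_real_derivative ht_phi_deriv K x) (at x)"
proof -
  have "((\<lambda>x. x * (ht_slope K * x - ln x - ht_offset K)) has_real_derivative
      1 * (ht_slope K * x - ln x - ht_offset K) + x * (ht_slope K - 1 / x)) (at x)"
    using assms by (intro derivative_eq_intros) auto
  moreover have "1 * (ht_slope K * x - ln x - ht_offset K) + x * (ht_slope K - 1 / x) = ht_phi_deriv K x"
    unfolding ht_phi_deriv_def using assms by (simp add: field_simps)
  ultimately show ?thesis unfolding ht_phi_def[abs_def] by simp
qed

lemma ht_phi_convex: "convex_on {1 / (2 * ht_slope K)..} (ht_phi K)"
proof (rule convex_on_realI[where f' = "ht_phi_deriv K"])
  have pos: "0 < x" if "x \<in> {1 / (2 * ht_slope K)..}" for x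
    using that ht_slope_pos by (smt (verit) atLeast_iff divide_pos_pos)
  show "connected {1 / (2 * ht_slope K)..}" by simp
  show "(ht_phi K has_real_derivative ht_phi_deriv K x) (at x)" if "x \<in> {1 / (2 * ht_slope K)..}" for x
    using ht_phi_has_derivative pos that by blast
  fix x y assume xy: "x \<in> {1 / (2 * ht_slope K)..}" "y \<in> {1 / (2 * ht_slope K)..}" "x \<le> y"
  have x: "0 < x" and y: "0 < y" using pos xy by auto
  have "ln (y / x) \<le> y / x - 1" using x y by (intro ln_le_minus_one) simp
  then have "ln y - ln x \<le> (y - x) * (1 / x)" using x y by (simp add: ln_div field_simps)
  also have "\<dots> \<le> (y - x) * (2 * ht_slope K)"
    using xy x ht_slope_pos by (intro mult_left_mono) (simp_all add: field_simps)
  finally show "ht_phi_deriv K x \<le> ht_phi_deriv K y" unfolding ht_phi_deriv_def by (simp add: algebra_simps)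
qed


lemma ht_pair_has_derivative:
  assumes "0 < b" "b < 1"
  shows "(ht_pair K has_real_derivative ht_pair_deriv K b) (at b)"
proof -
  have inner: "((\<lambda>b. (1 - b) / K) has_real_derivative - 1 / K) (at b)"
    using K_ge_1 by (auto intro!: derivative_eq_intros)
  have "((\<lambda>b. ht_phi K ((1 - b) / K)) has_real_derivative ht_phi_deriv K ((1 - b) / K) * (- 1 / K)) (at b)"
    using DERIV_chain2[OF ht_phi_has_derivative inner] assms K_ge_1 by simp
  then have "((\<lambda>b. ht_phi K b + K * ht_phi K ((1 - b) / K)) has_real_derivative
      ht_phi_deriv K b + K * (ht_phi_deriv K ((1 - b) / K) * (- 1 / K))) (at b)"
    using ht_phi_has_derivative[of b] assms by (intro derivative_eq_intros) auto
  then show ?thesis unfolding ht_pair_def[abs_def] ht_pair_deriv_def using K_ge_1 by simp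
qed

lemma ht_pair_deriv_convex: "convex_on {0<..1 / (K + 1)} (ht_pair_deriv K)"
proof (rule convex_on_realI[where f' = "\<lambda>b. 2 * ht_slope K + 2 * ht_slope K / K - 1 / b - 1 / (1 - b)"])
  have r_lt_half: "1 / (K + 1) \<le> 1 / 2" using K_ge_1 by (simp add: field_simps)
  show "connected {0<..1 / (K + 1)}" by simp
  fix b assume b: "b \<in> {0<..1 / (K + 1)}"
  then have b1: "0 < b" "b < 1" using r_lt_half by auto
  then have b1: "0 < b" "b < 1" "0 < (1 - b) / K" using K_ge_1 by auto
  have phi_deriv': "(ht_phi_deriv K has_real_derivative 2 * ht_slope K - 1 / x) (at x)" if "0 < x" for x
    unfolding ht_phi_deriv_def[abs_def] using that by (auto intro!: derivative_eq_intros)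
  have inner: "((\<lambda>b. (1 - b) / K) has_real_derivative - 1 / K) (at b)"
    using K_ge_1 by (auto intro!: derivative_eq_intros)
  have eq: "(2 * ht_slope K - 1 / b) - (2 * ht_slope K - 1 / ((1 - b) / K)) * (- 1 / K)
      = 2 * ht_slope K + 2 * ht_slope K / K - 1 / b - 1 / (1 - b)"
    using b1 K_ge_1 by (simp add: field_simps)
  have "((\<lambda>b. ht_phi_deriv K b - ht_phi_deriv K ((1 - b) / K)) has_real_derivative
      (2 * ht_slope K - 1 / b) - (2 * ht_slope K - 1 / ((1 - b) / K)) * (- 1 / K)) (at b)"
    using DERIV_chain2[OF phi_deriv'[OF b1(3)] inner] phi_deriv'[OF b1(1)]
    by (intro derivative_eq_intros) auto
  then show "(ht_pair_deriv K has_real_derivative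
      2 * ht_slope K + 2 * ht_slope K / K - 1 / b - 1 / (1 - b)) (at b)"
    unfolding ht_pair_deriv_def[abs_def] by (simp only: eq)
next
  fix x y assume xy: "x \<in> {0<..1 / (K + 1)}" "y \<in> {0<..1 / (K + 1)}" "x \<le> y"
  have "1 / (K + 1) \<le> 1 / 2" using K_ge_1 by (simp add: field_simps)
  then have x: "0 < x" "x \<le> 1 / 2" and y: "0 < y" "y \<le> 1 / 2" using xy by auto
  have "x * y \<le> (1 - x) * (1 - y)" using x y by (simp add: algebra_simps)
  then have "(y - x) / ((1 - x) * (1 - y)) \<le> (y - x) / (x * y)"
    using xy x y by (intro divide_left_mono) (auto intro: mult_pos_pos)
  moreover have "(y - x) / ((1 - x) * (1 - y)) = 1 / (1 - y) - 1 / (1 - x)"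
    using x y by (simp add: field_simps)
  moreover have "(y - x) / (x * y) = 1 / x - 1 / y" using x y by (simp add: field_simps)
  ultimately show "2 * ht_slope K + 2 * ht_slope K / K - 1 / x - 1 / (1 - x)
      \<le> 2 * ht_slope K + 2 * ht_slope K / K - 1 / y - 1 / (1 - y)" by simp
qed

lemma ht_lower_root_fixed: "(1 - 1 / (K + 1)) / K = 1 / (K + 1)"
proof -
  have "1 - 1 / (K + 1) = K / (K + 1)" using K_ge_1 by (simp add: field_simps)
  then show ?thesis using K_ge_1 by simp
qed

lemma ht_pair_deriv_lower_root: "ht_pair_deriv K (1 / (K + 1)) = 0"
  unfolding ht_pair_deriv_def ht_lower_root_fixed by simp

lemma ht_pair_lower_root: "ht_pair K (1 / (K + 1)) = 0"
  unfolding ht_pair_def ht_lower_root_fixed ht_phi_lower_root by simp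

lemma ht_pair_zero: "ht_pair K 0 = 0"
  unfolding ht_pair_def using ht_phi_upper_root by (simp add: ht_phi_zero)

lemma ht_pair_ge_neg:
  assumes "0 < e" "e \<le> 1 / (K + 1)"
  shows "- e \<le> ht_pair K e"
proof -
  define x where "x = (1 - e) / K"
  have "1 / (K + 1) < 1" using K_ge_1 by (simp add: field_simps)
  then have "e < 1" using assms by linarith
  then have x: "0 < x" "K * x = 1 - e" unfolding x_def using K_ge_1 by auto
  have slope: "0 \<le> ht_slope K / K - 1" "ht_slope K / K - 1 \<le> 1"
    using ht_slope_bounds K_ge_1 by (simp_all add: field_simps)
  have Kx: "K * x - 1 = - e" using x(2) by simp
  have "K * x * (e * (ht_slope K / K - 1)) \<le> 1 * e"
    using x assms slope by (intro mult_mono) (auto simp: mult_le_cancel_left1)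
  then have "- e \<le> - (K * x * (e * (ht_slope K / K - 1)))" by simp
  also have "\<dots> = K * (x * ((K * x - 1) * (ht_slope K / K - 1)))"
    unfolding Kx by (simp add: algebra_simps)
  also have "\<dots> \<le> K * ht_phi K x"
    using ht_bracket_ge_upper[OF x(1)] x(1) K_ge_1 unfolding ht_phi_def
    by (intro mult_left_mono) auto
  finally have "- e \<le> K * ht_phi K x" .
  moreover have "0 \<le> ht_phi K e" using assms by (intro ht_phi_nonneg_below) auto
  ultimately show ?thesis unfolding ht_pair_def x_def by simp
qed

text \<open>If \<open>ht_pair\<close> were negative somewhere, the mean value theorem would give a point left of the root
  \<open>1 / (K + 1)\<close> where its derivative is positive; by convexity the derivative is then positive
  everywhere further left.\<close>
lemma ht_pair_deriv_pos_if_neg: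
  assumes b: "0 < b" "b < 1 / (K + 1)" and neg: "ht_pair K b < 0" and x: "0 < x" "x \<le> b"
  shows "0 < ht_pair_deriv K x"
proof -
  define r where "r = 1 / (K + 1)"
  have r: "0 < r" "r < 1" unfolding r_def using K_ge_1 by (simp_all add: field_simps)
  obtain \<eta> where \<eta>: "b < \<eta>" "\<eta> < r" "ht_pair K r - ht_pair K b = (r - b) * ht_pair_deriv K \<eta>"
    using MVT2[of b r "ht_pair K" "ht_pair_deriv K"] ht_pair_has_derivative b r unfolding r_def by force
  have "0 < (r - b) * ht_pair_deriv K \<eta>"
    using \<eta>(3) neg ht_pair_lower_root unfolding r_def by simp
  then have "0 < ht_pair_deriv K \<eta>" using \<eta> by (simp add: zero_less_mult_iff)
  then show ?thesis
    using convex_on_pos_left_of_root[OF ht_pair_deriv_convex, of x r \<eta>] x \<eta> r b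
      ht_pair_deriv_lower_root unfolding r_def by auto
qed

lemma ht_pair_nonneg:
  assumes b: "0 \<le> b" "b \<le> 1 / (K + 1)"
  shows "0 \<le> ht_pair K b"
proof (rule ccontr)
  assume neg: "\<not> 0 \<le> ht_pair K b"
  have "1 / (K + 1) < 1" using K_ge_1 by (simp add: field_simps)
  moreover have "b \<noteq> 0" "b \<noteq> 1 / (K + 1)" using neg ht_pair_zero ht_pair_lower_root by auto
  ultimately have b': "0 < b" "b < 1 / (K + 1)" "b < 1" using b by auto
  define e where "e = min (b / 2) (- ht_pair K b / 2)"
  have e: "0 < e" "e < b" unfolding e_def using b' neg by auto
  have "ht_pair K e < ht_pair K b"
    using DERIV_pos_imp_increasing[OF e(2)] ht_pair_has_derivative ht_pair_deriv_pos_if_neg b' neg e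
    by (smt (verit))
  moreover have "- e \<le> ht_pair K e" using ht_pair_ge_neg e b' by auto
  moreover have "ht_pair K b / 2 \<le> - e" unfolding e_def by auto
  ultimately show False using neg by linarith
qed

end

lemma convex_on_sum_list_mean:
  fixes f :: "real \<Rightarrow> real"
  assumes "convex_on C f" "set xs \<subseteq> C" "xs \<noteq> []"
  shows "length xs * f (sum_list xs / length xs) \<le> sum_list (map f xs)"
proof -
  define m where "m = length xs"
  have m: "0 < m" unfolding m_def using assms by simp
  have "f (sum_list xs / m) = f (\<Sum>i<m. (1 / m) *\<^sub>R xs ! i)"
    unfolding m_def by (simp add: sum_list_sum_nth atLeast0LessThan sum_divide_distrib[symmetric])
  also have "\<dots> \<le> (\<Sum>i<m. (1 / m) * f (xs ! i))"
    using assms m by (intro convex_on_sum) (auto simp: m_def)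
  also have "\<dots> = sum_list (map f xs) / m"
    unfolding m_def by (simp add: sum_list_sum_nth atLeast0LessThan sum_divide_distrib[symmetric])
  finally show ?thesis using m unfolding m_def[symmetric] by (simp add: pos_le_divide_eq mult.commute)
qed

lemma ht_phi_nonneg_small_plus_equal_large:
  fixes k m :: nat and b :: real
  assumes k: "1 \<le> k" and m: "0 < m" and b: "0 \<le> b" "b \<le> 1 / (real k + 1)" "real k * b \<le> 1 / 2"
  shows "0 \<le> ht_phi k b + m * ht_phi k ((1 - b) / m)"
proof -
  define K where "K = real k"
  have K: "1 \<le> K" and b': "b \<le> 1 / (K + 1)" "K * b \<le> 1 / 2" using k b unfolding K_def by auto
  have "1 / (K + 1) < 1" using K by (simp add: field_simps)
  then have "b < 1" using b'(1) by linarith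
  have phi_b: "0 \<le> ht_phi K b" using ht_phi_nonneg_below[OF K b(1) b'(1)] .
  consider "k < m" | "m = k" | "m < k" by linarith
  then show ?thesis
  proof cases
    case 1
    then have "K + 1 \<le> m" unfolding K_def by simp
    moreover have "0 \<le> b * (K + 1)" using b K by simp
    ultimately have "(1 - b) * (K + 1) \<le> m" by (simp add: algebra_simps)
    then have "(1 - b) / m \<le> 1 / (K + 1)" using K m by (simp add: field_simps)
    then have "0 \<le> ht_phi K ((1 - b) / m)" using ht_phi_nonneg_below[OF K] \<open>b < 1\<close> by simp
    then show ?thesis using phi_b unfolding K_def by simp
  next
    case 2
    then show ?thesis using ht_pair_nonneg[OF K b(1) b'(1)] unfolding ht_pair_def K_def by simp
  next
    case 3
    then have "real m \<le> K - 1" unfolding K_def by linarith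
    then have "1 / K \<le> (1 - b) / m" using m K b'(2) by (simp add: field_simps)
    then show ?thesis using ht_phi_nonneg_above[OF K] phi_b unfolding K_def by simp
  qed
qed

lemma ht_phi_sum_one_small:
  fixes k :: nat
  assumes k: "1 \<le> k" and b: "0 \<le> b" "b \<le> 1 / (2 * ht_slope k)"
    and large: "\<forall>x\<in>set xs. 1 / (2 * ht_slope k) < x" and sum: "b + sum_list xs = 1"
  shows "0 \<le> ht_phi k b + sum_list (map (ht_phi k) xs)"
proof -
  have K: "1 \<le> real k" using k by simp
  have slope: "k \<le> ht_slope k" "0 < ht_slope k" using ht_slope_bounds[OF K] ht_slope_pos[OF K] by auto
  have "b * (2 * k) \<le> b * (2 * ht_slope k)" using b slope by (intro mult_left_mono) auto
  moreover have "b * (2 * ht_slope k) \<le> 1" using b slope by (simp add: field_simps)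
  moreover have "b * 1 \<le> b * k" using b K by (intro mult_left_mono) auto
  ultimately have "b * (real k + 1) \<le> 1" "real k * b \<le> 1 / 2" "b < 1" by (simp_all add: algebra_simps)
  then have b_le: "b \<le> 1 / (real k + 1)" "real k * b \<le> 1 / 2" by (simp_all add: field_simps)
  have m: "0 < length xs" using sum \<open>b < 1\<close> by auto
  have "set xs \<subseteq> {1 / (2 * ht_slope k)..}" using large by force
  moreover have "sum_list xs = 1 - b" using sum by simp
  ultimately have "length xs * ht_phi k ((1 - b) / length xs) \<le> sum_list (map (ht_phi k) xs)"
    using convex_on_sum_list_mean[OF ht_phi_convex[OF K], of xs] m by simp
  then show ?thesis using ht_phi_nonneg_small_plus_equal_large[OF k m b(1) b_le] by simp
qed

lemma ht_phi_sum_list_nonneg: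
  fixes k :: nat
  assumes "1 \<le> k" "\<forall>x\<in>set xs. 0 \<le> x" "sum_list xs = 1"
  shows "0 \<le> sum_list (map (ht_phi k) xs)"
  using assms(2,3)
proof (induction "length xs" arbitrary: xs rule: less_induct)
  case less
  define t where "t = 1 / (2 * ht_slope k)"
  have t: "0 < t" "2 * t = 1 / ht_slope k"
    unfolding t_def using ht_slope_pos[of k] assms(1) by (simp_all add: field_simps)
  define small where "small = filter (\<lambda>x. x \<le> t) xs"
  define large where "large = filter (\<lambda>x. \<not> x \<le> t) xs"
  have split: "sum_list (map f xs) = sum_list (map f small) + sum_list (map f large)" for f :: "real \<Rightarrow> real"
    unfolding small_def large_def by (induction xs) auto
  have small: "\<forall>x\<in>set small. 0 \<le> x \<and> x \<le> t" using less.prems unfolding small_def by auto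
  have large: "\<forall>x\<in>set large. t < x" unfolding large_def by auto
  have sum: "sum_list small + sum_list large = 1" using split[of id] less.prems by simp
  show ?case
  proof (cases "length small \<le> 1")
    case True
    then have "sum_list (map (ht_phi k) small) = ht_phi k (sum_list small)"
      and "0 \<le> sum_list small" "sum_list small \<le> t"
      using small t by (auto simp: ht_phi_zero le_Suc_eq length_Suc_conv)
    then show ?thesis using ht_phi_sum_one_small[OF assms(1), of "sum_list small" large]
      split[of "ht_phi k"] sum large unfolding t_def by simp
  next
    case False
    then obtain x y rest where xy: "small = x # y # rest"
      by (cases small; cases "tl small") auto
    define merged where "merged = (x + y) # rest @ large"
    have "length merged < length xs"
      using sum_length_filter_compl[of "\<lambda>x. x \<le> t" xs] xy unfolding merged_def small_def large_def by simp
    moreover have "\<forall>z\<in>set merged. 0 \<le> z" using small large t xy unfolding merged_def by force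
    moreover have "sum_list merged = 1" using sum xy unfolding merged_def by simp
    ultimately have "0 \<le> sum_list (map (ht_phi k) merged)" using less.hyps by blast
    moreover have "ht_phi k (x + y) \<le> ht_phi k x + ht_phi k y"
      using ht_phi_subadditive[of k x y] assms(1) small t xy by auto
    ultimately show ?thesis using split[of "ht_phi k"] xy unfolding merged_def by simp
  qed
qed

theorem harremoes_topsoe:
  fixes k n :: nat and p :: "nat \<Rightarrow> real"
  assumes "1 \<le> k" "\<And>i. i < n \<Longrightarrow> 0 \<le> p i" "(\<Sum>i<n. p i) = 1"
  shows "ln k + (k + 1) * (1 - k * (\<Sum>i<n. (p i)\<^sup>2)) * ln (1 + 1 / k) \<le> - (\<Sum>i<n. p i * ln (p i))"
proof -
  have "0 \<le> sum_list (map (ht_phi k) (map p [0..<n]))"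
    using assms by (intro ht_phi_sum_list_nonneg) (auto simp: sum_list_sum_nth atLeast0LessThan)
  also have "\<dots> = (\<Sum>i<n. ht_slope k * (p i)\<^sup>2 - p i * ln (p i) - ht_offset k * p i)"
    by (simp add: sum_list_sum_nth atLeast0LessThan ht_phi_def algebra_simps power2_eq_square)
  also have "\<dots> = ht_slope k * (\<Sum>i<n. (p i)\<^sup>2) - (\<Sum>i<n. p i * ln (p i)) - ht_offset k * (\<Sum>i<n. p i)"
    by (simp add: sum_subtractf sum_distrib_left)
  finally show ?thesis using assms(3) unfolding ht_slope_def ht_offset_def ht_log_def
    by (simp add: algebra_simps)
qed

section \<open>Shannon entropy\<close>

definition entropy :: "nat \<Rightarrow> (nat \<Rightarrow> real) \<Rightarrow> real" where
  "entropy n p = - (\<Sum>i<n. p i * log 2 (p i))"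

lemma sum_mult_log2_eq: "(\<Sum>i\<in>I. f i * log 2 (f i)) = (\<Sum>i\<in>I. f i * ln (f i)) / ln 2"
  unfolding log_def by (simp add: sum_divide_distrib)

lemma shannon2_eq: "shannon2 dA dB p = - (\<Sum>i<dA. \<Sum>s<dB. p i s * log 2 (p i s))"
proof -
  have "(if x = 0 then 0 else x * y) = x * (y::real)" for x y by simp
  then show ?thesis unfolding shannon2_def by presburger
qed

corollary entropy_ge_harremoes_topsoe:
  fixes k n :: nat and p :: "nat \<Rightarrow> real"
  assumes "1 \<le> k" "\<And>i. i < n \<Longrightarrow> 0 \<le> p i" "(\<Sum>i<n. p i) = 1"
  shows "log 2 k + (k + 1) * (1 - k * (\<Sum>i<n. (p i)\<^sup>2)) * log 2 (1 + 1 / k) \<le> entropy n p"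
proof -
  have "(ln k + (k + 1) * (1 - k * (\<Sum>i<n. (p i)\<^sup>2)) * ln (1 + 1 / k)) / ln 2
      \<le> - (\<Sum>i<n. p i * ln (p i)) / ln 2"
    using harremoes_topsoe[OF assms] by (intro divide_right_mono) auto
  then show ?thesis unfolding entropy_def sum_mult_log2_eq by (simp add: log_def add_divide_distrib)
qed

lemma xlnx_tangent: "0 \<le> x \<Longrightarrow> 0 < y \<Longrightarrow> x * ln y + x - y \<le> x * ln (x::real)"
proof (cases "x = 0")
  case False
  assume x: "0 \<le> x" and y: "0 < y"
  have "1 - 1 / (x / y) \<le> ln (x / y)" using x y False by (intro one_minus_inverse_le_ln) simp
  then have "x * (1 - y / x) \<le> x * (ln x - ln y)" using x y False by (intro mult_left_mono) (auto simp: ln_div)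
  then show ?thesis using x False by (simp add: algebra_simps)
qed simp

lemma xlnx_convex_sum:
  fixes q x :: "nat \<Rightarrow> real"
  assumes q: "\<And>j. j < J \<Longrightarrow> 0 \<le> q j" and q_sum: "(\<Sum>j<J. q j) = 1"
    and x: "\<And>j. j < J \<Longrightarrow> 0 \<le> x j"
  shows "(\<Sum>j<J. q j * x j) * ln (\<Sum>j<J. q j * x j) \<le> (\<Sum>j<J. q j * (x j * ln (x j)))"
proof -
  define y where "y = (\<Sum>j<J. q j * x j)"
  have "0 \<le> y" unfolding y_def using q x by (intro sum_nonneg) auto
  show ?thesis
  proof (cases "y = 0")
    case True
    then have "\<forall>j\<in>{..<J}. q j * x j = 0"
      unfolding y_def using q x by (subst sum_nonneg_eq_0_iff[symmetric]) auto
    then have "(\<Sum>j<J. q j * (x j * ln (x j))) = 0"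
      by (intro sum.neutral) (simp add: mult.assoc[symmetric])
    then show ?thesis using True unfolding y_def by simp
  next
    case False
    with \<open>0 \<le> y\<close> have "0 < y" by simp
    have "(\<Sum>j<J. q j * (x j * ln y + x j - y)) = (\<Sum>j<J. q j * x j) * ln y + (\<Sum>j<J. q j * x j) - (\<Sum>j<J. q j) * y"
      by (simp add: algebra_simps sum.distrib sum_subtractf sum_distrib_left sum_distrib_right)
    then have "y * ln y = (\<Sum>j<J. q j * (x j * ln y + x j - y))"
      using q_sum unfolding y_def[symmetric] by simp
    also have "\<dots> \<le> (\<Sum>j<J. q j * (x j * ln (x j)))"
      using xlnx_tangent[OF _ \<open>0 < y\<close>] q x by (intro sum_mono mult_left_mono) auto
    finally show ?thesis unfolding y_def .
  qed
qed

lemma sum_xlnx_product: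
  fixes a b :: "nat \<Rightarrow> real"
  assumes "\<And>i. 0 \<le> a i" "\<And>s. 0 \<le> b s" "(\<Sum>i<dA. a i) = 1" "(\<Sum>s<dB. b s) = 1"
  shows "(\<Sum>i<dA. \<Sum>s<dB. (a i * b s) * ln (a i * b s))
    = (\<Sum>i<dA. a i * ln (a i)) + (\<Sum>s<dB. b s * ln (b s))"
proof -
  have "(a i * b s) * ln (a i * b s) = (a i * ln (a i)) * b s + a i * (b s * ln (b s))" for i s
    using assms(1)[of i] assms(2)[of s] by (cases "a i = 0 \<or> b s = 0") (auto simp: ln_mult algebra_simps)
  then have "(\<Sum>i<dA. \<Sum>s<dB. (a i * b s) * ln (a i * b s))
      = (\<Sum>i<dA. \<Sum>s<dB. (a i * ln (a i)) * b s) + (\<Sum>i<dA. \<Sum>s<dB. a i * (b s * ln (b s)))"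
    by (simp add: sum.distrib)
  also have "\<dots> = (\<Sum>i<dA. a i * ln (a i)) * (\<Sum>s<dB. b s) + (\<Sum>i<dA. a i) * (\<Sum>s<dB. b s * ln (b s))"
    by (simp only: sum_product)
  finally show ?thesis using assms(3,4) by simp
qed

text \<open>Concavity of entropy, in the form of convexity of \<open>x ln x\<close>.\<close>
lemma sum_xlnx_mixture_of_products:
  fixes q :: "nat \<Rightarrow> real" and a b :: "nat \<Rightarrow> nat \<Rightarrow> real"
  assumes q: "\<And>j. j < J \<Longrightarrow> 0 \<le> q j" and q_sum: "(\<Sum>j<J. q j) = 1"
    and a: "\<And>j i. j < J \<Longrightarrow> 0 \<le> a j i" and a_sum: "\<And>j. j < J \<Longrightarrow> (\<Sum>i<dA. a j i) = 1"
    and b: "\<And>j s. j < J \<Longrightarrow> 0 \<le> b j s" and b_sum: "\<And>j. j < J \<Longrightarrow> (\<Sum>s<dB. b j s) = 1"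
  defines "P \<equiv> \<lambda>i s. \<Sum>j<J. q j * a j i * b j s"
  shows "(\<Sum>i<dA. \<Sum>s<dB. P i s * ln (P i s))
    \<le> (\<Sum>j<J. q j * ((\<Sum>i<dA. a j i * ln (a j i)) + (\<Sum>s<dB. b j s * ln (b j s))))"
proof -
  have "P i s * ln (P i s) \<le> (\<Sum>j<J. q j * ((a j i * b j s) * ln (a j i * b j s)))" for i s
    unfolding P_def using xlnx_convex_sum[OF q q_sum, of "\<lambda>j. a j i * b j s"] a b
    by (simp add: mult.assoc)
  then have "(\<Sum>i<dA. \<Sum>s<dB. P i s * ln (P i s))
      \<le> (\<Sum>i<dA. \<Sum>s<dB. \<Sum>j<J. q j * ((a j i * b j s) * ln (a j i * b j s)))"
    by (intro sum_mono)
  also have "\<dots> = (\<Sum>j<J. \<Sum>i<dA. \<Sum>s<dB. q j * ((a j i * b j s) * ln (a j i * b j s)))"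
    by (rule trans[OF sum.cong[OF refl sum.swap] sum.swap])
  also have "\<dots> = (\<Sum>j<J. q j * (\<Sum>i<dA. \<Sum>s<dB. (a j i * b j s) * ln (a j i * b j s)))"
    by (simp add: sum_distrib_left)
  also have "\<dots> = (\<Sum>j<J. q j * ((\<Sum>i<dA. a j i * ln (a j i)) + (\<Sum>s<dB. b j s * ln (b j s))))"
    using a b a_sum b_sum by (intro sum.cong refl) (simp add: sum_xlnx_product)
  finally show ?thesis .
qed

lemma entropy_mixture_of_products:
  fixes q :: "nat \<Rightarrow> real" and a b :: "nat \<Rightarrow> nat \<Rightarrow> real"
  assumes "\<And>j. j < J \<Longrightarrow> 0 \<le> q j" "(\<Sum>j<J. q j) = 1"
    and "\<And>j i. j < J \<Longrightarrow> 0 \<le> a j i" "\<And>j. j < J \<Longrightarrow> (\<Sum>i<dA. a j i) = 1"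
    and "\<And>j s. j < J \<Longrightarrow> 0 \<le> b j s" "\<And>j. j < J \<Longrightarrow> (\<Sum>s<dB. b j s) = 1"
  shows "(\<Sum>j<J. q j * (entropy dA (a j) + entropy dB (b j)))
    \<le> shannon2 dA dB (\<lambda>i s. \<Sum>j<J. q j * a j i * b j s)"
proof -
  have "q j * (entropy dA (a j) + entropy dB (b j))
      = - (q j * ((\<Sum>i<dA. a j i * ln (a j i)) + (\<Sum>s<dB. b j s * ln (b j s)))) / ln 2" for j
    unfolding entropy_def sum_mult_log2_eq by (simp add: field_simps)
  then show ?thesis
    using sum_xlnx_mixture_of_products[OF assms] unfolding shannon2_eq sum_mult_log2_eq
    by (simp add: sum_divide_distrib[symmetric] sum_negf divide_right_mono)
qed

section \<open>Density operators and mutually unbiased bases\<close>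

lemma density_op_hermitian: "density_op d \<sigma> \<Longrightarrow> i < d \<Longrightarrow> j < d \<Longrightarrow> \<sigma> i j = cnj (\<sigma> j i)"
  unfolding density_op_def by blast

lemma density_op_psd: "density_op d \<sigma> \<Longrightarrow> 0 \<le> Re (\<Sum>i<d. \<Sum>j<d. cnj (v i) * \<sigma> i j * v j)"
  unfolding density_op_def by blast

lemma density_op_trace: "density_op d \<sigma> \<Longrightarrow> (\<Sum>i<d. \<sigma> i i) = 1"
  unfolding density_op_def by blast

lemma orthonormal_basisD:
  "orthonormal_basis d e \<Longrightarrow> i < d \<Longrightarrow> j < d \<Longrightarrow> cinner d (e i) (e j) = (if i = j then 1 else 0)"
  unfolding orthonormal_basis_def by blast

lemma mutually_unbiased_basis: "mutually_unbiased d M e \<Longrightarrow> m < M \<Longrightarrow> orthonormal_basis d (e m)"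
  unfolding mutually_unbiased_def by blast

lemma mutually_unbiasedD:
  "mutually_unbiased d M e \<Longrightarrow> m < M \<Longrightarrow> n < M \<Longrightarrow> m \<noteq> n \<Longrightarrow> i < d \<Longrightarrow> j < d \<Longrightarrow>
    (cmod (cinner d (e m i) (e n j)))\<^sup>2 = 1 / real d"
  unfolding mutually_unbiased_def by blast

text \<open>Completeness of an orthonormal basis: a square matrix with a left inverse is invertible.\<close>
lemma orthonormal_basis_complete:
  assumes onb: "orthonormal_basis d e" and "a < d" "a' < d"
  shows "(\<Sum>i<d. e i a * cnj (e i a')) = (if a = a' then 1 else 0)"
proof -
  define X :: "complex mat" where "X = mat d d (\<lambda>(i, k). cnj (e i k))"
  define Y :: "complex mat" where "Y = mat d d (\<lambda>(k, j). e j k)"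
  have X: "X \<in> carrier_mat d d" and Y: "Y \<in> carrier_mat d d" unfolding X_def Y_def by auto
  have "X * Y = 1\<^sub>m d"
  proof (rule eq_matI)
    fix i j assume "i < dim_row (1\<^sub>m d :: complex mat)" "j < dim_col (1\<^sub>m d :: complex mat)"
    then show "(X * Y) $$ (i, j) = 1\<^sub>m d $$ (i, j)"
      using orthonormal_basisD[OF onb] unfolding X_def Y_def cinner_def
      by (simp add: scalar_prod_def lessThan_atLeast0)
  qed (auto simp: X_def Y_def)
  then have "Y * X = 1\<^sub>m d" by (rule mat_mult_left_right_inverse[OF X Y])
  moreover have "(Y * X) $$ (a, a') = (\<Sum>i<d. e i a * cnj (e i a'))"
    using assms unfolding X_def Y_def by (simp add: scalar_prod_def lessThan_atLeast0)
  ultimately show ?thesis using assms by simp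
qed

definition expval :: "nat \<Rightarrow> (nat \<Rightarrow> nat \<Rightarrow> complex) \<Rightarrow> (nat \<Rightarrow> complex) \<Rightarrow> complex" where
  "expval d \<sigma> u = (\<Sum>a<d. \<Sum>a'<d. cnj (u a) * \<sigma> a a' * u a')"

lemma expval_real:
  assumes "density_op d \<sigma>"
  shows "expval d \<sigma> u = of_real (Re (expval d \<sigma> u))"
proof -
  have herm: "cnj (\<sigma> a a') = \<sigma> a' a" if "a < d" "a' < d" for a a'
    using density_op_hermitian[OF assms that(2,1)] by simp
  have "cnj (expval d \<sigma> u) = (\<Sum>a<d. \<Sum>a'<d. u a * cnj (\<sigma> a a') * cnj (u a'))"
    unfolding expval_def by simp
  also have "\<dots> = (\<Sum>a<d. \<Sum>a'<d. u a * \<sigma> a' a * cnj (u a'))"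
    using herm by (intro sum.cong refl) auto
  also have "\<dots> = expval d \<sigma> u"
    unfolding expval_def by (subst sum.swap) (simp add: mult_ac)
  finally have "Im (cnj (expval d \<sigma> u)) = Im (expval d \<sigma> u)" by simp
  then have "Im (expval d \<sigma> u) = 0" by simp
  then show ?thesis by (simp add: complex_eq_iff)
qed

lemma expval_nonneg: "density_op d \<sigma> \<Longrightarrow> 0 \<le> Re (expval d \<sigma> u)"
  unfolding expval_def by (rule density_op_psd)

lemma expval_sum_basis:
  assumes dens: "density_op d \<sigma>" and onb: "orthonormal_basis d e"
  shows "(\<Sum>i<d. expval d \<sigma> (e i)) = 1"
proof -
  have "(\<Sum>i<d. expval d \<sigma> (e i)) = (\<Sum>a<d. \<Sum>a'<d. \<sigma> a a' * (\<Sum>i<d. e i a' * cnj (e i a)))"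
    unfolding expval_def sum_distrib_left
    by (subst sum.swap, rule sum.cong[OF refl], subst sum.swap) (simp add: mult_ac)
  also have "\<dots> = (\<Sum>a<d. \<Sum>a'<d. if a' = a then \<sigma> a a' else 0)"
    using orthonormal_basis_complete[OF onb] by (intro sum.cong refl) auto
  also have "\<dots> = (\<Sum>a<d. \<sigma> a a)" by (simp add: sum.delta)
  finally show ?thesis using density_op_trace[OF dens] by simp
qed

lemma expval_sum_basis_Re:
  "density_op d \<sigma> \<Longrightarrow> orthonormal_basis d e \<Longrightarrow> (\<Sum>i<d. Re (expval d \<sigma> (e i))) = 1"
  using arg_cong[OF expval_sum_basis, of d \<sigma> e Re] by (simp add: Re_sum)

lemma density_op_diag_real: "density_op d \<sigma> \<Longrightarrow> a < d \<Longrightarrow> \<sigma> a a = of_real (Re (\<sigma> a a))"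
  using density_op_hermitian[of d \<sigma> a a] by (simp add: complex_eq_iff)

lemma sum_two_point_support:
  fixes a a' d :: nat
  assumes "a < d" "a' < d" "a \<noteq> a'" "\<And>j. j < d \<Longrightarrow> j \<noteq> a \<Longrightarrow> j \<noteq> a' \<Longrightarrow> f j = 0"
  shows "(\<Sum>j<d. f j) = f a + (f a' :: 'a :: comm_monoid_add)"
proof -
  have "(\<Sum>j<d. f j) = (\<Sum>j\<in>{a, a'}. f j)"
    using assms by (intro sum.mono_neutral_right) auto
  then show ?thesis using assms(3) by simp
qed

text \<open>The quadratic form evaluated at \<open>s |a\<rangle> - w conj(\<sigma>\<^sub>a\<^sub>a\<^sub>') |a'\<rangle>\<close>.\<close>
lemma density_op_two_point_form:
  assumes dens: "density_op d \<sigma>" and a: "a < d" "a' < d" "a \<noteq> a'"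
  shows "0 \<le> s\<^sup>2 * Re (\<sigma> a a) - 2 * s * w * (cmod (\<sigma> a a'))\<^sup>2
    + w\<^sup>2 * (cmod (\<sigma> a a'))\<^sup>2 * Re (\<sigma> a' a')"
proof -
  define \<beta> where "\<beta> = \<sigma> a a'"
  define x y where "x = complex_of_real s" and "y = - of_real w * cnj \<beta>"
  define v where "v j = (if j = a then x else if j = a' then y else 0)" for j
  have "(\<Sum>i<d. \<Sum>j<d. cnj (v i) * \<sigma> i j * v j)
      = (\<Sum>i<d. cnj (v i) * \<sigma> i a * x + cnj (v i) * \<sigma> i a' * y)"
    using a by (intro sum.cong refl) (subst sum_two_point_support[of a d a'], auto simp: v_def)
  also have "\<dots> = (cnj x * \<sigma> a a * x + cnj x * \<sigma> a a' * y) + (cnj y * \<sigma> a' a * x + cnj y * \<sigma> a' a' * y)"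
    using a by (subst sum_two_point_support[of a d a']) (auto simp: v_def)
  also have "\<dots> = (\<beta> * cnj \<beta>) * of_real (- 2 * s * w) + of_real (s\<^sup>2 * Re (\<sigma> a a))
      + of_real (w\<^sup>2 * Re (\<sigma> a' a')) * (\<beta> * cnj \<beta>)"
    using density_op_diag_real[OF dens a(1)] density_op_diag_real[OF dens a(2)]
      density_op_hermitian[OF dens a(2,1)]
    unfolding x_def y_def \<beta>_def[symmetric] by (simp add: algebra_simps power2_eq_square)
  also have "\<dots> = of_real (s\<^sup>2 * Re (\<sigma> a a) - 2 * s * w * (cmod \<beta>)\<^sup>2 + w\<^sup>2 * (cmod \<beta>)\<^sup>2 * Re (\<sigma> a' a'))"
    unfolding complex_norm_square[symmetric] by (simp add: algebra_simps)
  finally show ?thesis using density_op_psd[OF dens, of v] unfolding \<beta>_def by simp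
qed

lemma density_op_diag_nonneg:
  assumes "density_op d \<sigma>" "a < d"
  shows "0 \<le> Re (\<sigma> a a)"
proof -
  define v :: "nat \<Rightarrow> complex" where "v j = (if j = a then 1 else 0)" for j
  have "(\<Sum>i<d. \<Sum>j<d. cnj (v i) * \<sigma> i j * v j) = (\<Sum>i<d. cnj (v i) * \<sigma> i a)"
    unfolding v_def using assms(2) by (intro sum.cong refl) (simp add: if_distrib sum.delta cong: if_cong)
  also have "\<dots> = (\<Sum>i<d. if i = a then \<sigma> a a else 0)" unfolding v_def by (intro sum.cong refl) simp
  also have "\<dots> = \<sigma> a a" using assms(2) by simp
  finally show ?thesis using density_op_psd[OF assms(1), of v] by simp
qed

lemma density_op_entry_bound:
  assumes dens: "density_op d \<sigma>" and a: "a < d" "a' < d"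
  shows "(cmod (\<sigma> a a'))\<^sup>2 \<le> Re (\<sigma> a a) * Re (\<sigma> a' a')"
proof (cases "a = a'")
  case True
  have "cmod (\<sigma> a a) = \<bar>Re (\<sigma> a a)\<bar>" by (subst density_op_diag_real[OF dens a(1)]) simp
  then show ?thesis using True by (simp add: power2_eq_square)
next
  case False
  define \<alpha> \<gamma> n where "\<alpha> = Re (\<sigma> a a)" and "\<gamma> = Re (\<sigma> a' a')" and "n = (cmod (\<sigma> a a'))\<^sup>2"
  have form: "0 \<le> s\<^sup>2 * \<alpha> - 2 * s * w * n + w\<^sup>2 * n * \<gamma>" for s w
    using density_op_two_point_form[OF dens a False] unfolding \<alpha>_def \<gamma>_def n_def .
  have "0 \<le> \<gamma>" unfolding \<gamma>_def using density_op_diag_nonneg[OF dens a(2)] .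
  show ?thesis
  proof (cases "\<gamma> = 0")
    case True
    text \<open>Then the form is affine in \<open>w\<close>, which forces \<open>n = 0\<close>.\<close>
    have "0 \<le> \<alpha> - 2 * ((\<alpha> + 1) / (2 * n)) * n" using form[of 1 "(\<alpha> + 1) / (2 * n)"] True by simp
    then have "n = 0" using \<open>0 \<le> \<gamma>\<close> by (cases "n = 0") (auto simp: field_simps)
    then show ?thesis using True unfolding n_def \<gamma>_def by simp
  next
    case False
    then have "0 \<le> \<gamma> * (\<gamma> * \<alpha> - n)" using form[of \<gamma> 1] by (simp add: algebra_simps power2_eq_square)
    then show ?thesis using False \<open>0 \<le> \<gamma>\<close> unfolding \<alpha>_def \<gamma>_def n_def
      by (simp add: zero_le_mult_iff algebra_simps)
  qed
qed

definition hs_norm2 :: "nat \<Rightarrow> (nat \<Rightarrow> nat \<Rightarrow> complex) \<Rightarrow> real" where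
  "hs_norm2 d A = (\<Sum>a<d. \<Sum>a'<d. (cmod (A a a'))\<^sup>2)"

lemma density_op_purity_le_1:
  assumes "density_op d \<sigma>"
  shows "hs_norm2 d \<sigma> \<le> 1"
proof -
  have "hs_norm2 d \<sigma> \<le> (\<Sum>a<d. \<Sum>a'<d. Re (\<sigma> a a) * Re (\<sigma> a' a'))"
    unfolding hs_norm2_def using density_op_entry_bound[OF assms] by (intro sum_mono) auto
  also have "\<dots> = (\<Sum>a<d. Re (\<sigma> a a))\<^sup>2" by (simp add: sum_product power2_eq_square)
  also have "(\<Sum>a<d. Re (\<sigma> a a)) = 1"
    using arg_cong[OF density_op_trace[OF assms], of Re] by (simp add: Re_sum)
  finally show ?thesis by simp
qed

definition hs_inner :: "nat \<Rightarrow> (nat \<Rightarrow> nat \<Rightarrow> complex) \<Rightarrow> (nat \<Rightarrow> nat \<Rightarrow> complex) \<Rightarrow> complex" where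
  "hs_inner d A B = (\<Sum>a<d. \<Sum>a'<d. cnj (A a a') * B a a')"

definition proj :: "(nat \<Rightarrow> complex) \<Rightarrow> nat \<Rightarrow> nat \<Rightarrow> complex" where
  "proj u = (\<lambda>a a'. u a * cnj (u a'))"

definition id_op :: "nat \<Rightarrow> nat \<Rightarrow> complex" where
  "id_op = (\<lambda>a a'. if a = a' then 1 else 0)"

lemma hs_inner_sum_right: "hs_inner d A (\<lambda>a a'. \<Sum>k\<in>I. f k a a') = (\<Sum>k\<in>I. hs_inner d A (f k))"
  unfolding hs_inner_def sum_distrib_left
  by (subst sum.swap, rule sum.cong[OF refl], subst sum.swap) simp

lemma hs_inner_sum_left: "hs_inner d (\<lambda>a a'. \<Sum>k\<in>I. f k a a') B = (\<Sum>k\<in>I. hs_inner d (f k) B)"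
  unfolding hs_inner_def cnj_sum sum_distrib_right
  by (subst sum.swap, rule sum.cong[OF refl], subst sum.swap) simp

lemma hs_inner_scale_right: "hs_inner d A (\<lambda>a a'. c * B a a') = c * hs_inner d A B"
  unfolding hs_inner_def by (simp add: sum_distrib_left mult_ac)

lemma hs_inner_scale_left: "hs_inner d (\<lambda>a a'. c * A a a') B = cnj c * hs_inner d A B"
  unfolding hs_inner_def by (simp add: sum_distrib_left mult_ac)

lemma hs_inner_diff_right: "hs_inner d A (\<lambda>a a'. B a a' - C a a') = hs_inner d A B - hs_inner d A C"
  unfolding hs_inner_def by (simp add: sum_subtractf right_diff_distrib)

lemma hs_inner_diff_left: "hs_inner d (\<lambda>a a'. A a a' - B a a') C = hs_inner d A C - hs_inner d B C"
  unfolding hs_inner_def by (simp add: sum_subtractf left_diff_distrib)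

lemma hs_inner_commute: "hs_inner d B A = cnj (hs_inner d A B)"
  unfolding hs_inner_def by (simp add: mult.commute)

lemma hs_inner_self: "hs_inner d A A = of_real (hs_norm2 d A)"
proof -
  have "hs_inner d A A = (\<Sum>a<d. \<Sum>a'<d. of_real ((cmod (A a a'))\<^sup>2))"
    unfolding hs_inner_def by (intro sum.cong refl) (simp only: complex_norm_square mult.commute)
  then show ?thesis unfolding hs_norm2_def by simp
qed

lemma hs_inner_density_proj:
  assumes "density_op d \<sigma>"
  shows "hs_inner d \<sigma> (proj u) = expval d \<sigma> u"
proof -
  have herm: "cnj (\<sigma> a a') = \<sigma> a' a" if "a < d" "a' < d" for a a'
    using density_op_hermitian[OF assms that(2,1)] by simp
  show ?thesis
    unfolding hs_inner_def proj_def expval_def using herm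
    by (subst sum.swap, intro sum.cong refl) (simp add: mult_ac)
qed

lemma hs_inner_density_id: "density_op d \<sigma> \<Longrightarrow> hs_inner d \<sigma> id_op = 1"
  unfolding hs_inner_def id_op_def
  by (simp add: if_distrib sum.delta density_op_trace flip: cnj_sum cong: if_cong)

lemma hs_inner_proj_proj: "hs_inner d (proj u) (proj v) = of_real ((cmod (cinner d u v))\<^sup>2)"
proof -
  have "hs_inner d (proj u) (proj v) = (\<Sum>a<d. cnj (u a) * v a) * (\<Sum>a'<d. u a' * cnj (v a'))"
    unfolding hs_inner_def proj_def sum_product by (intro sum.cong refl) (simp add: mult_ac)
  then show ?thesis unfolding cinner_def complex_norm_square by simp
qed

lemma hs_inner_proj_id: "hs_inner d (proj u) id_op = cinner d u u"
  unfolding hs_inner_def proj_def id_op_def cinner_def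
  by (intro sum.cong refl) (simp add: if_distrib sum.delta cong: if_cong)

lemma hs_inner_id_id: "hs_inner d id_op id_op = of_nat d"
  unfolding hs_inner_def id_op_def by (simp add: if_distrib sum.delta cong: if_cong)

definition basis_mix :: "nat \<Rightarrow> nat \<Rightarrow> (nat \<Rightarrow> nat \<Rightarrow> nat \<Rightarrow> complex) \<Rightarrow> (nat \<Rightarrow> nat \<Rightarrow> real) \<Rightarrow>
    nat \<Rightarrow> nat \<Rightarrow> complex" where
  "basis_mix d M e w = (\<lambda>a a'. \<Sum>m<M. \<Sum>i<d. of_real (w m i) * proj (e m i) a a')"

lemma hs_inner_basis_mix_right:
  "hs_inner d A (basis_mix d M e w) = (\<Sum>m<M. \<Sum>i<d. of_real (w m i) * hs_inner d A (proj (e m i)))"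
  unfolding basis_mix_def hs_inner_sum_right hs_inner_scale_right ..

lemma hs_inner_basis_mix_left:
  "hs_inner d (basis_mix d M e w) A = (\<Sum>m<M. \<Sum>i<d. of_real (w m i) * hs_inner d (proj (e m i)) A)"
  unfolding basis_mix_def hs_inner_sum_left hs_inner_scale_left by simp

context
  fixes d M :: nat and e :: "nat \<Rightarrow> nat \<Rightarrow> nat \<Rightarrow> complex" and w :: "nat \<Rightarrow> nat \<Rightarrow> real"
  assumes mub: "mutually_unbiased d M e"
    and w_sum: "\<And>m. m < M \<Longrightarrow> (\<Sum>i<d. w m i) = 1"
begin

lemma hs_inner_proj_basis_mix:
  assumes mi: "m < M" "i < d"
  shows "hs_inner d (proj (e m i)) (basis_mix d M e w) = of_real (w m i + (real M - 1) / real d)"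
proof -
  define f where "f n = (\<Sum>j<d. w n j * (cmod (cinner d (e m i) (e n j)))\<^sup>2)" for n
  have "f m = (\<Sum>j<d. if j = i then w m i else 0)"
    using orthonormal_basisD[OF mutually_unbiased_basis[OF mub mi(1)] mi(2)]
    unfolding f_def by (intro sum.cong refl) auto
  then have "f m = w m i" using mi(2) by simp
  moreover have "f n = 1 / real d" if "n < M" "n \<noteq> m" for n
    using mutually_unbiasedD[OF mub mi(1) that(1) that(2)[symmetric] mi(2)] w_sum[OF that(1)]
    unfolding f_def by (simp add: sum_divide_distrib[symmetric])
  ultimately have "(\<Sum>n<M. f n) = w m i + (real M - 1) / real d"
    using mi by (simp add: sum.remove[of _ m] of_nat_diff)
  moreover have "hs_inner d (proj (e m i)) (basis_mix d M e w) = of_real (\<Sum>n<M. f n)"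
    unfolding hs_inner_basis_mix_right hs_inner_proj_proj f_def by simp
  ultimately show ?thesis by simp
qed

lemma hs_inner_basis_mix_self:
  "hs_inner d (basis_mix d M e w) (basis_mix d M e w)
    = of_real ((\<Sum>m<M. \<Sum>i<d. (w m i)\<^sup>2) + (real M - 1) / real d * real M)"
proof -
  have "hs_inner d (basis_mix d M e w) (basis_mix d M e w)
      = of_real (\<Sum>m<M. \<Sum>i<d. (w m i)\<^sup>2 + (real M - 1) / real d * w m i)"
    unfolding hs_inner_basis_mix_left
    by (simp add: hs_inner_proj_basis_mix power2_eq_square algebra_simps)
  also have "(\<Sum>m<M. \<Sum>i<d. (w m i)\<^sup>2 + (real M - 1) / real d * w m i)
      = (\<Sum>m<M. \<Sum>i<d. (w m i)\<^sup>2) + (real M - 1) / real d * (\<Sum>m<M. \<Sum>i<d. w m i)"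
    by (simp only: sum.distrib sum_distrib_left)
  also have "(\<Sum>m<M. \<Sum>i<d. w m i) = real M" using w_sum by simp
  finally show ?thesis .
qed

lemma hs_inner_basis_mix_id: "hs_inner d (basis_mix d M e w) id_op = of_nat M"
proof -
  have "hs_inner d (basis_mix d M e w) id_op = of_real (\<Sum>m<M. \<Sum>i<d. w m i)"
    unfolding hs_inner_basis_mix_left hs_inner_proj_id
    using orthonormal_basisD[OF mutually_unbiased_basis[OF mub]] by simp
  then show ?thesis using w_sum by simp
qed

end

text \<open>The bound \<open>\<Sum>\<^sub>m \<Sum>\<^sub>i p\<^sub>m\<^sub>i\<^sup>2 \<le> 1 + (M - 1) / d\<close> on the total index of coincidence is
  \<open>\<parallel>\<sigma> - T\<parallel>\<^sup>2 \<ge> 0\<close> in the Hilbert-Schmidt norm, with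
  \<open>T = \<Sum>\<^sub>m \<Sum>\<^sub>i p\<^sub>m\<^sub>i |i\<^sub>m\<rangle>\<langle>i\<^sub>m| - (M - 1) / d \<cdot> I\<close>.\<close>
lemma mub_coincidence_bound:
  assumes dens: "density_op d \<sigma>" and mub: "mutually_unbiased d M e" and "0 < d"
  shows "(\<Sum>m<M. \<Sum>i<d. (Re (expval d \<sigma> (e m i)))\<^sup>2) \<le> (real d + real M - 1) / real d"
proof -
  define p where "p m i = Re (expval d \<sigma> (e m i))" for m i
  define S where "S = (\<Sum>m<M. \<Sum>i<d. (p m i)\<^sup>2)"
  define \<gamma> where "\<gamma> = (real M - 1) / real d"
  define Q where "Q = basis_mix d M e p"
  define T where "T = (\<lambda>a a'. Q a a' - of_real \<gamma> * id_op a a')"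
  have p_sum: "(\<Sum>i<d. p m i) = 1" if "m < M" for m
    unfolding p_def using expval_sum_basis_Re[OF dens mutually_unbiased_basis[OF mub that]] .
  have "expval d \<sigma> (e m i) = of_real (p m i)" for m i
    unfolding p_def by (rule expval_real[OF dens])
  then have "hs_inner d \<sigma> Q = of_real S"
    unfolding Q_def S_def hs_inner_basis_mix_right hs_inner_density_proj[OF dens]
    by (simp add: power2_eq_square)
  then have \<sigma>T: "hs_inner d \<sigma> T = of_real (S - \<gamma>)"
    unfolding T_def hs_inner_diff_right hs_inner_scale_right hs_inner_density_id[OF dens] by simp
  have QQ: "hs_inner d Q Q = of_real (S + \<gamma> * real M)"
    unfolding Q_def S_def \<gamma>_def by (rule hs_inner_basis_mix_self[OF mub p_sum])
  have QI: "hs_inner d Q id_op = of_nat M"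
    unfolding Q_def by (rule hs_inner_basis_mix_id[OF mub p_sum])
  have TT: "hs_inner d T T = of_real (S - \<gamma> * real M + \<gamma>\<^sup>2 * real d)"
    unfolding T_def hs_inner_diff_right hs_inner_diff_left hs_inner_scale_right hs_inner_scale_left
      hs_inner_commute[of d id_op Q] QQ QI hs_inner_id_id
    by (simp add: power2_eq_square algebra_simps)
  have "of_real (hs_norm2 d (\<lambda>a a'. \<sigma> a a' - T a a'))
      = hs_inner d \<sigma> \<sigma> - hs_inner d T \<sigma> - (hs_inner d \<sigma> T - hs_inner d T T)"
    unfolding hs_inner_self[symmetric] hs_inner_diff_right hs_inner_diff_left ..
  also have "\<dots> = of_real (hs_norm2 d \<sigma> - 2 * (S - \<gamma>) + (S - \<gamma> * real M + \<gamma>\<^sup>2 * real d))"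
    unfolding hs_inner_commute[of d T \<sigma>] \<sigma>T TT by (simp add: hs_inner_self)
  finally have "hs_norm2 d (\<lambda>a a'. \<sigma> a a' - T a a')
      = hs_norm2 d \<sigma> - 2 * (S - \<gamma>) + (S - \<gamma> * real M + \<gamma>\<^sup>2 * real d)"
    by (simp only: of_real_eq_iff)
  moreover have "0 \<le> hs_norm2 d (\<lambda>a a'. \<sigma> a a' - T a a')" unfolding hs_norm2_def by (intro sum_nonneg) auto
  moreover have "\<gamma>\<^sup>2 * real d = \<gamma> * (real M - 1)" unfolding \<gamma>_def using \<open>0 < d\<close> by (simp add: power2_eq_square)
  ultimately have "S \<le> hs_norm2 d \<sigma> + \<gamma>" by (simp add: algebra_simps)
  also have "\<dots> \<le> 1 + \<gamma>" using density_op_purity_le_1[OF dens] by simp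
  also have "1 + \<gamma> = (real d + real M - 1) / real d" unfolding \<gamma>_def using \<open>0 < d\<close> by (simp add: field_simps)
  finally show ?thesis unfolding S_def p_def .
qed

section \<open>Separable states\<close>

lemma Kval_eq_nat:
  assumes "1 \<le> M" "1 \<le> d"
  obtains k :: nat where "1 \<le> k" "Kval M d = real k"
proof -
  have "0 \<le> (real M - 1) * (real d - 1)" using assms by simp
  then have "real d + real M - 1 \<le> real M * real d" by (simp add: algebra_simps)
  then have "1 \<le> real M * real d / (real d + real M - 1)" using assms by simp
  then have "1 \<le> \<lfloor>real M * real d / (real d + real M - 1)\<rfloor>" by simp
  then show ?thesis
    using that[of "nat \<lfloor>real M * real d / (real d + real M - 1)\<rfloor>"] unfolding Kval_def by linarith
qed

lemma bound_term_le_entropy_sum: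
  assumes dens: "density_op d \<sigma>" and mub: "mutually_unbiased d M e" and "1 \<le> d" "1 \<le> M"
  shows "bound_term M d \<le> (\<Sum>m<M. entropy d (\<lambda>i. Re (expval d \<sigma> (e m i))))"
proof -
  obtain k :: nat where k: "1 \<le> k" "Kval M d = real k" using Kval_eq_nat[OF \<open>1 \<le> M\<close> \<open>1 \<le> d\<close>] .
  define p where "p m i = Re (expval d \<sigma> (e m i))" for m i
  define L where "L = log 2 (1 + 1 / real k)"
  have "0 \<le> L" unfolding L_def by (simp add: add_pos_nonneg)
  define C where "C = (real d + real M - 1) / real d"
  have "bound_term M d = M * log 2 k + (k + 1) * (M - k * C) * L"
    unfolding bound_term_def Let_def k(2) L_def C_def by simp
  also have "\<dots> \<le> M * log 2 k + (k + 1) * (M - k * (\<Sum>m<M. \<Sum>i<d. (p m i)\<^sup>2)) * L"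
  proof -
    have "(\<Sum>m<M. \<Sum>i<d. (p m i)\<^sup>2) \<le> C"
      using mub_coincidence_bound[OF dens mub] \<open>1 \<le> d\<close> unfolding p_def C_def by simp
    then have "M - k * C \<le> M - k * (\<Sum>m<M. \<Sum>i<d. (p m i)\<^sup>2)"
      by (simp add: mult_left_mono)
    then show ?thesis using \<open>0 \<le> L\<close> by (simp add: mult_left_mono mult_right_mono)
  qed
  also have "\<dots> = (\<Sum>m<M. log 2 k + (k + 1) * (1 - k * (\<Sum>i<d. (p m i)\<^sup>2)) * L)"
    by (simp add: sum.distrib sum_subtractf sum_distrib_left algebra_simps)
  also have "\<dots> \<le> (\<Sum>m<M. entropy d (p m))"
    unfolding L_def p_def using expval_nonneg[OF dens] expval_sum_basis_Re[OF dens mutually_unbiased_basis[OF mub]]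
    by (intro sum_mono entropy_ge_harremoes_topsoe k(1)) auto
  finally show ?thesis unfolding p_def .
qed

lemma sum_mixture_of_products:
  fixes c :: "nat \<Rightarrow> 'a :: comm_semiring_1" and f g :: "nat \<Rightarrow> nat \<Rightarrow> nat \<Rightarrow> 'a"
  shows "(\<Sum>a<dA. \<Sum>b<dB. \<Sum>a'<dA. \<Sum>b'<dB. \<Sum>j<J. c j * (f j a a' * g j b b'))
       = (\<Sum>j<J. c j * ((\<Sum>a<dA. \<Sum>a'<dA. f j a a') * (\<Sum>b<dB. \<Sum>b'<dB. g j b b')))"
proof -
  have "(\<Sum>a<dA. \<Sum>b<dB. \<Sum>a'<dA. \<Sum>b'<dB. \<Sum>j<J. c j * (f j a a' * g j b b'))
      = (\<Sum>a<dA. \<Sum>b<dB. \<Sum>a'<dA. \<Sum>j<J. \<Sum>b'<dB. c j * (f j a a' * g j b b'))"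
    by (rule sum.cong[OF refl])+ (rule sum.swap)
  also have "\<dots> = (\<Sum>a<dA. \<Sum>b<dB. \<Sum>j<J. \<Sum>a'<dA. \<Sum>b'<dB. c j * (f j a a' * g j b b'))"
    by (rule sum.cong[OF refl])+ (rule sum.swap)
  also have "\<dots> = (\<Sum>a<dA. \<Sum>j<J. \<Sum>b<dB. \<Sum>a'<dA. \<Sum>b'<dB. c j * (f j a a' * g j b b'))"
    by (rule sum.cong[OF refl])+ (rule sum.swap)
  also have "\<dots> = (\<Sum>j<J. \<Sum>a<dA. \<Sum>b<dB. \<Sum>a'<dA. \<Sum>b'<dB. c j * (f j a a' * g j b b'))"
    by (rule sum.swap)
  also have "\<dots> = (\<Sum>j<J. c j * ((\<Sum>a<dA. \<Sum>a'<dA. f j a a') * (\<Sum>b<dB. \<Sum>b'<dB. g j b b')))"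
    by (simp only: sum_product) (simp only: sum_distrib_left)
  finally show ?thesis .
qed

lemma joint_prob_mixture:
  fixes J :: nat and q :: "nat \<Rightarrow> real" and \<rho>A \<rho>B :: "nat \<Rightarrow> nat \<Rightarrow> nat \<Rightarrow> complex"
  assumes dens: "\<forall>j<J. density_op dA (\<rho>A j) \<and> density_op dB (\<rho>B j)"
    and \<rho>: "\<forall>a<dA. \<forall>b<dB. \<forall>a'<dA. \<forall>b'<dB.
      \<rho> (a, b) (a', b') = (\<Sum>j<J. complex_of_real (q j) * \<rho>A j a a' * \<rho>B j b b')"
  shows "joint_prob dA dB \<rho> u v = (\<Sum>j<J. q j * Re (expval dA (\<rho>A j) u) * Re (expval dB (\<rho>B j) v))"
proof -
  have "(\<Sum>a<dA. \<Sum>b<dB. \<Sum>a'<dA. \<Sum>b'<dB. cnj (u a) * cnj (v b) * \<rho> (a, b) (a', b') * u a' * v b')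
      = (\<Sum>a<dA. \<Sum>b<dB. \<Sum>a'<dA. \<Sum>b'<dB. \<Sum>j<J. of_real (q j) *
          ((cnj (u a) * \<rho>A j a a' * u a') * (cnj (v b) * \<rho>B j b b' * v b')))"
    using \<rho> by (intro sum.cong refl) (simp add: sum_distrib_left sum_distrib_right mult_ac)
  also have "\<dots> = (\<Sum>j<J. of_real (q j) * (expval dA (\<rho>A j) u * expval dB (\<rho>B j) v))"
    unfolding expval_def by (rule sum_mixture_of_products)
  also have "\<dots> = (\<Sum>j<J. of_real (q j * Re (expval dA (\<rho>A j) u) * Re (expval dB (\<rho>B j) v)))"
  proof (rule sum.cong[OF refl])
    fix j assume "j \<in> {..<J}"
    then obtain x y where "expval dA (\<rho>A j) u = of_real x" "expval dB (\<rho>B j) v = of_real y"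
      using dens expval_real[of dA "\<rho>A j" u] expval_real[of dB "\<rho>B j" v] by blast
    then show "of_real (q j) * (expval dA (\<rho>A j) u * expval dB (\<rho>B j) v)
        = of_real (q j * Re (expval dA (\<rho>A j) u) * Re (expval dB (\<rho>B j) v))"
      by simp
  qed
  finally show ?thesis unfolding joint_prob_def by simp
qed

lemma entropy_sum_le_shannon2_separable:
  fixes J :: nat and q :: "nat \<Rightarrow> real" and \<rho>A \<rho>B :: "nat \<Rightarrow> nat \<Rightarrow> nat \<Rightarrow> complex"
  assumes q: "\<forall>j<J. 0 \<le> q j" "(\<Sum>j<J. q j) = 1"
    and dens: "\<forall>j<J. density_op dA (\<rho>A j) \<and> density_op dB (\<rho>B j)"
    and \<rho>: "\<forall>a<dA. \<forall>b<dB. \<forall>a'<dA. \<forall>b'<dB.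
      \<rho> (a, b) (a', b') = (\<Sum>j<J. complex_of_real (q j) * \<rho>A j a a' * \<rho>B j b b')"
    and onb: "orthonormal_basis dA u" "orthonormal_basis dB v"
  shows "(\<Sum>j<J. q j * (entropy dA (\<lambda>i. Re (expval dA (\<rho>A j) (u i)))
      + entropy dB (\<lambda>s. Re (expval dB (\<rho>B j) (v s)))))
    \<le> shannon2 dA dB (\<lambda>i s. joint_prob dA dB \<rho> (u i) (v s))"
  unfolding joint_prob_mixture[OF dens \<rho>] using q dens onb
  by (intro entropy_mixture_of_products) (auto simp: expval_nonneg expval_sum_basis_Re)

theorem mainTheorem5:
  fixes dA dB M :: nat
    and \<rho> :: "nat \<times> nat \<Rightarrow> nat \<times> nat \<Rightarrow> complex"
    and eA :: "nat \<Rightarrow> nat \<Rightarrow> nat \<Rightarrow> complex"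
    and eB :: "nat \<Rightarrow> nat \<Rightarrow> nat \<Rightarrow> complex"
  assumes "dA \<ge> 2" and "dB \<ge> 2" and "M \<ge> 1"
    and "separable dA dB \<rho>"
    and "mutually_unbiased dA M eA"
    and "mutually_unbiased dB M eB"
  shows "(\<Sum>m<M. shannon2 dA dB (\<lambda>i s. joint_prob dA dB \<rho> (eA m i) (eB m s)))
           \<ge> bound_term M dA + bound_term M dB"
proof -
  obtain J :: nat and q :: "nat \<Rightarrow> real" and \<rho>A \<rho>B :: "nat \<Rightarrow> nat \<Rightarrow> nat \<Rightarrow> complex"
    where q: "\<forall>j<J. 0 \<le> q j" "(\<Sum>j<J. q j) = 1"
    and dens: "\<forall>j<J. density_op dA (\<rho>A j) \<and> density_op dB (\<rho>B j)"
    and \<rho>: "\<forall>a<dA. \<forall>b<dB. \<forall>a'<dA. \<forall>b'<dB.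
      \<rho> (a, b) (a', b') = (\<Sum>j<J. complex_of_real (q j) * \<rho>A j a a' * \<rho>B j b b')"
    using assms(4) unfolding separable_def by blast
  define H where "H j m = entropy dA (\<lambda>i. Re (expval dA (\<rho>A j) (eA m i)))
    + entropy dB (\<lambda>s. Re (expval dB (\<rho>B j) (eB m s)))" for j m
  have "bound_term M dA + bound_term M dB = (\<Sum>j<J. q j * (bound_term M dA + bound_term M dB))"
    using q(2) by (simp flip: sum_distrib_right)
  also have "\<dots> \<le> (\<Sum>j<J. q j * (\<Sum>m<M. H j m))"
    using q(1) dens assms(1-3,5,6) unfolding H_def
    by (intro sum_mono mult_left_mono) (auto simp: sum.distrib intro!: add_mono bound_term_le_entropy_sum)
  also have "\<dots> = (\<Sum>j<J. \<Sum>m<M. q j * H j m)"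
    by (simp add: sum_distrib_left)
  also have "\<dots> = (\<Sum>m<M. \<Sum>j<J. q j * H j m)"
    by (rule sum.swap)
  also have "\<dots> \<le> (\<Sum>m<M. shannon2 dA dB (\<lambda>i s. joint_prob dA dB \<rho> (eA m i) (eB m s)))"
    using assms(5,6) unfolding H_def
    by (intro sum_mono entropy_sum_le_shannon2_separable[OF q dens \<rho>]) (auto intro: mutually_unbiased_basis)
  finally show ?thesis .
qed

end
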